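(* There is an absolute constant $c>0$ such that the following holds. Let $(X,d)$ be a finite metric space with terminals $t_1,\dots,t_k$, $k\ge2$, let $\Delta>0$, and let $\Pi$ be the random partial partition produced by the truncated-exponential ball-carving procedure with parameters $\lambda=\Delta/\ln k$ and $\Delta$. If $P$ is a shortest path in $X$ with $d(P)<\lambda$, then for every $t\ge1$, $\Pr[Z_P>t]\le 2e^{-ct}$.
   Context: Truncated exponential $\mathrm{Texp}(\lambda,\Delta)$: the distribution on $[0,\Delta)$ with density $g(x)=\frac{1}{\lambda(1-e^{-\Delta/\lambda})}e^{-x/\lambda}$. $B(x,r)=\{y\in X:d(x,y)\le r\}$. Ball-carving procedure: for $j=1,\dots,k$ choose independently $R_j\sim\mathrm{Texp}(\lambda,\Delta)$, let $B_j=B(t_j,R_j)$ and $S_j=B_j\setminus\bigcup_{m<j}B_m$; output $\Pi=\{S_1,\dots,S_k\}\setminus\{\emptyset\}$. A shortest path is a sequence $P=(x_0,\dots,x_\ell)$ of points with $\sum_i d(x_{i-1},x_i)=d(x_0,x_\ell)$, of length $d(P)=d(x_0,x_\ell)$. $Z_P$ is the number of clusters $S\in\Pi$ with $S\cap P\neq\emptyset$. *)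

theory Defs
  imports "HOL-Probability.Probability"
begin

definition finite_metric_space :: "'a set \<Rightarrow> ('a \<Rightarrow> 'a \<Rightarrow> real) \<Rightarrow> bool" where
  "finite_metric_space X d \<longleftrightarrow> finite X \<and>
     (\<forall>x\<in>X. \<forall>y\<in>X. d x y \<ge> 0 \<and> (d x y = 0 \<longleftrightarrow> x = y) \<and> d x y = d y x) \<and>
     (\<forall>x\<in>X. \<forall>y\<in>X. \<forall>z\<in>X. d x z \<le> d x y + d y z)"

definition texp_density :: "real \<Rightarrow> real \<Rightarrow> real \<Rightarrow> real" where
  "texp_density lam Del x =
     indicator {0..<Del} x * exp (- x / lam) / (lam * (1 - exp (- Del / lam)))"

definition texp :: "real \<Rightarrow> real \<Rightarrow> real measure" where
  "texp lam Del = density lborel (\<lambda>x. ennreal (texp_density lam Del x))"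

definition radii_measure :: "nat \<Rightarrow> real \<Rightarrow> real \<Rightarrow> (nat \<Rightarrow> real) measure" where
  "radii_measure k lam Del = PiM {..<k} (\<lambda>_. texp lam Del)"

definition cball_in :: "'a set \<Rightarrow> ('a \<Rightarrow> 'a \<Rightarrow> real) \<Rightarrow> 'a \<Rightarrow> real \<Rightarrow> 'a set" where
  "cball_in X d x r = {y \<in> X. d x y \<le> r}"

text \<open>Cluster S_j = B_j minus the union of B_m for m < j (indices 0-based).\<close>
definition cluster :: "'a set \<Rightarrow> ('a \<Rightarrow> 'a \<Rightarrow> real) \<Rightarrow> (nat \<Rightarrow> 'a) \<Rightarrow> (nat \<Rightarrow> real) \<Rightarrow> nat \<Rightarrow> 'a set" where
  "cluster X d t R j = cball_in X d (t j) (R j) - (\<Union>m<j. cball_in X d (t m) (R m))"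

definition partial_partition :: "'a set \<Rightarrow> ('a \<Rightarrow> 'a \<Rightarrow> real) \<Rightarrow> nat \<Rightarrow> (nat \<Rightarrow> 'a) \<Rightarrow> (nat \<Rightarrow> real) \<Rightarrow> 'a set set" where
  "partial_partition X d k t R = (cluster X d t R ` {..<k}) - {{}}"

definition Z_count :: "'a set \<Rightarrow> ('a \<Rightarrow> 'a \<Rightarrow> real) \<Rightarrow> nat \<Rightarrow> (nat \<Rightarrow> 'a) \<Rightarrow> 'a list \<Rightarrow> (nat \<Rightarrow> real) \<Rightarrow> nat" where
  "Z_count X d k t P R = card {S \<in> partial_partition X d k t R. S \<inter> set P \<noteq> {}}"

definition shortest_path :: "'a set \<Rightarrow> ('a \<Rightarrow> 'a \<Rightarrow> real) \<Rightarrow> 'a list \<Rightarrow> bool" where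
  "shortest_path X d P \<longleftrightarrow> P \<noteq> [] \<and> set P \<subseteq> X \<and>
     (\<Sum>i<length P - 1. d (P ! i) (P ! Suc i)) = d (hd P) (last P)"

definition path_length :: "('a \<Rightarrow> 'a \<Rightarrow> real) \<Rightarrow> 'a list \<Rightarrow> real" where
  "path_length d P = d (hd P) (last P)"

end

theory Submission
  imports Defs
begin

text \<open>
  Let a_j and b_j be the least and greatest distance from t_j to P, so b_j - a_j \<le> d(P) < \<lambda>.
  A cluster S_j meets P only if R_j \<ge> a_j and no earlier ball contains P, and at most one such
  j has R_j \<ge> b_j. Hence Z_P exceeds by at most one the number of straddling indices, those
  with a_j \<le> R_j < b_j and no earlier ball containing P. If n is the last straddling index and J
  the set of the others, the radii lie in a box of probability p_n \<Prod>_J p_i \<Prod>_(i<n, i\<notin>J) q_i,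
  where p_i = Pr[a_i \<le> R_i < b_i] and q_i = Pr[R_i < a_i]. Weighting each J by \<theta>^(|J|-(s-2))
  with \<theta> = 5/4 and summing gives Pr[Z_P > s] \<le> \<theta>^(2-s) \<Sum>_n p_n \<Prod>_(i<n) (\<theta> p_i + q_i).
  Since b_i - a_i \<le> \<lambda>, the truncated exponential density drops by at most a factor e across
  [a_i, b_i], and with e^(-\<Delta>/\<lambda>) = 1/k this gives 25 p_i + 16 q_i \<le> 16 (1 + 2/k), which keeps
  the sum below 4 (1 + 2/k)^k \<le> 4 e^2. So Pr[Z_P > s] \<le> 5 e^2 (4/5)^s; together with the trivial
  bound 1 this is at most 2 e^(-c s) for c = ln(5/4)/7.
\<close>

lemma inverse_one_minus_le:
  fixes u :: real
  assumes "0 \<le> u" and "u \<le> 1 / 2"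
  shows "1 / (1 - u) \<le> 1 + 2 * u"
proof -
  have "(1 + 2 * u) * (1 - u) = 1 + u * (1 - 2 * u)"
    by (simp add: algebra_simps)
  also have "\<dots> \<ge> 1"
    using assms by simp
  finally have "1 \<le> (1 + 2 * u) * (1 - u)" .
  then show ?thesis
    using assms by (simp add: divide_le_eq)
qed

lemma sum_subsets_card_gt_le_powr:
  fixes p q :: "'i \<Rightarrow> real" and \<theta> r :: real
  assumes "finite I" and "1 \<le> \<theta>" and "\<And>i. i \<in> I \<Longrightarrow> 0 \<le> p i" and "\<And>i. i \<in> I \<Longrightarrow> 0 \<le> q i"
  shows "(\<Sum>J\<in>{J. J \<subseteq> I \<and> r < real (card J)}. (\<Prod>i\<in>J. p i) * (\<Prod>i\<in>I - J. q i))
    \<le> \<theta> powr (- r) * (\<Prod>i\<in>I. \<theta> * p i + q i)"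
proof -
  define W where "W J = (\<Prod>i\<in>J. p i) * (\<Prod>i\<in>I - J. q i)" for J
  have W: "0 \<le> W J" if "J \<subseteq> I" for J
    unfolding W_def using assms that by (intro mult_nonneg_nonneg prod_nonneg) auto
  have "(\<Sum>J\<in>{J. J \<subseteq> I \<and> r < real (card J)}. W J)
      \<le> (\<Sum>J\<in>{J. J \<subseteq> I \<and> r < real (card J)}. \<theta> powr (- r) * (\<theta> ^ card J * W J))"
  proof (intro sum_mono)
    fix J assume "J \<in> {J. J \<subseteq> I \<and> r < real (card J)}"
    then have "1 \<le> \<theta> powr (real (card J) - r)" and "J \<subseteq> I"
      using assms by (auto intro: ge_one_powr_ge_zero)
    then have "1 * W J \<le> \<theta> powr (real (card J) - r) * W J"
      using W by (intro mult_right_mono) auto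
    also have "\<theta> powr (real (card J) - r) = \<theta> powr (- r) * \<theta> ^ card J"
      using assms powr_add[of \<theta> "- r" "real (card J)"] by (simp add: powr_realpow)
    finally show "W J \<le> \<theta> powr (- r) * (\<theta> ^ card J * W J)" by (simp add: mult.assoc)
  qed
  also have "\<dots> \<le> (\<Sum>J\<in>Pow I. \<theta> powr (- r) * (\<theta> ^ card J * W J))"
    using assms W by (intro sum_mono2) auto
  also have "\<dots> = \<theta> powr (- r) * (\<Sum>J\<in>Pow I. (\<Prod>i\<in>J. \<theta> * p i) * (\<Prod>i\<in>I - J. q i))"
    unfolding sum_distrib_left W_def using \<open>finite I\<close>
    by (intro sum.cong refl arg_cong[where f = "(*) _"])
       (auto simp: prod.distrib mult.assoc dest: finite_subset)
  also have "\<dots> = \<theta> powr (- r) * (\<Prod>i\<in>I. \<theta> * p i + q i)"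
    by (simp add: prod_add \<open>finite I\<close>)
  finally show ?thesis unfolding W_def .
qed

lemma prefix_products_sum_le:
  fixes p q :: "nat \<Rightarrow> real"
  assumes "\<And>i. i < k \<Longrightarrow> 0 \<le> p i" and "\<And>i. i < k \<Longrightarrow> 0 \<le> q i"
    and "\<And>i. i < k \<Longrightarrow> 25 * p i + 16 * q i \<le> 16 + 16 * \<epsilon>" and "0 \<le> \<epsilon>"
  shows "(\<Sum>n<k. 5/4 * p n * (\<Prod>i<n. 5/4 * p i + q i)) + 4 * (\<Prod>i<k. 5/4 * p i + q i)
    \<le> 4 * (1 + \<epsilon>) ^ k"
  using assms
proof (induction k)
  case 0
  then show ?case by simp
next
  case (Suc k)
  define T where "T = (\<Sum>n<k. 5/4 * p n * (\<Prod>i<n. 5/4 * p i + q i))"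
  define P where "P = (\<Prod>i<k. 5/4 * p i + q i)"
  have IH: "T + 4 * P \<le> 4 * (1 + \<epsilon>) ^ k"
    unfolding T_def P_def using Suc.prems by (intro Suc.IH) auto
  have "0 \<le> P" unfolding P_def using Suc.prems by (intro prod_nonneg) auto
  have "0 \<le> T" unfolding T_def using Suc.prems
    by (intro sum_nonneg mult_nonneg_nonneg prod_nonneg) auto
  have "(\<Sum>n<Suc k. 5/4 * p n * (\<Prod>i<n. 5/4 * p i + q i)) + 4 * (\<Prod>i<Suc k. 5/4 * p i + q i)
      = T + P * (25/4 * p k + 4 * q k)"
    unfolding T_def P_def by (simp add: algebra_simps)
  also have "\<dots> \<le> T + P * (4 * (1 + \<epsilon>))"
    using Suc.prems(3)[of k] \<open>0 \<le> P\<close> by (intro add_left_mono mult_left_mono) auto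
  also have "\<dots> \<le> (1 + \<epsilon>) * (T + 4 * P)"
    using \<open>0 \<le> T\<close> Suc.prems by (simp add: algebra_simps)
  also have "\<dots> \<le> (1 + \<epsilon>) * (4 * (1 + \<epsilon>) ^ k)"
    using IH Suc.prems by (intro mult_left_mono) auto
  finally show ?case by simp
qed

lemma le_two_exp_of_le_min:
  fixes \<mu> w :: real
  assumes "\<mu> \<le> 1" and "\<mu> \<le> 37 * exp (- (7 * w))"
  shows "\<mu> \<le> 2 * exp (- w)"
proof (cases "exp w \<le> 2")
  case True
  then have "1 \<le> 2 * exp (- w)" by (simp add: exp_minus field_simps)
  then show ?thesis using assms(1) by simp
next
  case False
  then have "(2::real) ^ 6 \<le> exp w ^ 6" by (intro power_mono) auto
  then have "37 * exp (- (7 * w)) \<le> 2 * exp w ^ 6 * exp (- (7 * w))" by simp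
  also have "\<dots> = 2 * exp (- w)"
    by (simp add: exp_of_nat_mult[symmetric] mult.assoc flip: exp_add)
  finally show ?thesis using assms(2) by simp
qed

lemma five_fourths_powr_tail_le:
  fixes s :: real
  shows "(5/4) powr (1 - s) * (4 * exp 2) \<le> 37 * exp (- (7 * (ln (5/4) / 7 * s)))"
proof -
  have "exp (2::real) = exp 1 * exp 1" by (simp flip: exp_add)
  also have "\<dots> \<le> 2.72 * 2.72" using e_less_272 by (intro mult_mono) auto
  finally have "5 * exp (2::real) \<le> 37" by simp
  have "(5/4) powr (1 - s) * (4 * exp 2) = 5 * exp 2 * exp (- (7 * (ln (5/4) / 7 * s)))"
    using powr_add[of "5/4::real" 1 "- s"] by (simp add: powr_def)
  also have "\<dots> \<le> 37 * exp (- (7 * (ln (5/4) / 7 * s)))"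
    using \<open>5 * exp 2 \<le> 37\<close> by (intro mult_right_mono) auto
  finally show ?thesis .
qed

section \<open>Truncated exponential distribution\<close>

lemma texp_density_borel[measurable]:
  "(\<lambda>x. ennreal (texp_density lam Del x)) \<in> borel_measurable borel"
  unfolding texp_density_def by measurable

lemma space_texp[simp]: "space (texp lam Del) = UNIV"
  and sets_texp[simp]: "sets (texp lam Del) = sets borel"
  unfolding texp_def by simp_all

lemma emeasure_texp_lessThan:
  assumes lam: "lam > 0" and Del: "Del > 0"
  shows "emeasure (texp lam Del) {..<x} =
    ennreal ((1 - exp (- max 0 (min x Del) / lam)) / (1 - exp (- Del / lam)))"
proof -
  define Z where "Z = 1 - exp (- Del / lam)"
  define m where "m = max 0 (min x Del)"
  have Z: "Z > 0" unfolding Z_def using lam Del by simp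
  have "emeasure (texp lam Del) {..<x} =
      (\<integral>\<^sup>+y. ennreal (texp_density lam Del y) * indicator {..<x} y \<partial>lborel)"
    unfolding texp_def by (subst emeasure_density) auto
  also have "\<dots> = (\<integral>\<^sup>+y. ennreal (exp (- y / lam) / (lam * Z)) * indicator {0..m} y \<partial>lborel)"
    using AE_lborel_singleton[of m]
    by (intro nn_integral_cong_AE, eventually_elim)
       (auto simp: texp_density_def indicator_def m_def Z_def)
  also have "\<dots> = ennreal ((\<lambda>y. - exp (- y / lam) / Z) m - (\<lambda>y. - exp (- y / lam) / Z) 0)"
    using lam Z
    by (intro nn_integral_FTC_Icc) (auto intro!: derivative_eq_intros simp: m_def field_simps)
  finally show ?thesis
    unfolding m_def Z_def by (simp add: diff_divide_distrib)
qed

lemma emeasure_texp_atLeast_Del: "emeasure (texp lam Del) {Del..} = 0"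
proof -
  have "ennreal (texp_density lam Del x) * indicator {Del..} x = 0" for x
    by (simp add: texp_density_def indicator_def)
  then show ?thesis
    unfolding texp_def by (subst emeasure_density) (simp_all del: mult_eq_0_iff)
qed

lemma prob_space_texp:
  assumes "lam > 0" and "Del > 0"
  shows "prob_space (texp lam Del)"
proof
  have "emeasure (texp lam Del) UNIV
      = emeasure (texp lam Del) {..<Del} + emeasure (texp lam Del) {Del..}"
    by (subst plus_emeasure) (auto intro: arg_cong[where f = "emeasure _"])
  also have "\<dots> = 1"
    using emeasure_texp_lessThan[OF assms, of Del] assms
    by (simp add: emeasure_texp_atLeast_Del)
  finally show "emeasure (texp lam Del) (space (texp lam Del)) = 1" by simp
qed

lemma measure_texp_lessThan:
  assumes "lam > 0" and "Del > 0"
  shows "measure (texp lam Del) {..<x} =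
    (1 - exp (- max 0 (min x Del) / lam)) / (1 - exp (- Del / lam))"
proof -
  interpret prob_space "texp lam Del" using prob_space_texp[OF assms] .
  have "0 \<le> (1 - exp (- max 0 (min x Del) / lam)) / (1 - exp (- Del / lam))"
    using assms by (intro divide_nonneg_nonneg) auto
  then show ?thesis
    using emeasure_texp_lessThan[OF assms, of x] by (simp add: emeasure_eq_measure)
qed

lemma texp_interval_prefix_bound:
  assumes lam: "lam > 0" and Del: "Del > 0" and "0 \<le> a" "a \<le> b" "b \<le> a + lam"
  shows "25 * measure (texp lam Del) {a..<b} + 16 * measure (texp lam Del) {..<a}
    \<le> 16 / (1 - exp (- Del / lam))"
proof -
  interpret prob_space "texp lam Del" using prob_space_texp[OF lam Del] .
  define F where "F x = exp (- max 0 (min x Del) / lam)" for x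
  define Z where "Z = 1 - exp (- Del / lam)"
  have Z: "Z > 0" unfolding Z_def using lam Del by simp
  have cdf: "measure (texp lam Del) {..<x} = (1 - F x) / Z" for x
    unfolding F_def Z_def by (rule measure_texp_lessThan[OF lam Del])
  have "measure (texp lam Del) {a..<b} = measure (texp lam Del) ({..<b} - {..<a})"
    by (simp add: lessThan_minus_lessThan)
  also have "\<dots> = (F a - F b) / Z"
    using \<open>a \<le> b\<close> by (subst finite_measure_Diff) (auto simp: cdf diff_divide_distrib)
  finally have interval: "measure (texp lam Del) {a..<b} = (F a - F b) / Z" .
  have "- max 0 (min a Del) / lam \<le> 1 + - max 0 (min b Del) / lam"
    using assms by (simp add: field_simps)
  then have "F a \<le> exp 1 * F b"
    unfolding F_def by (simp flip: exp_add)
  also have "\<dots> \<le> 25 / 9 * F b"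
    using e_less_272 by (intro mult_right_mono) (auto simp: F_def)
  finally have "25 * (F a - F b) + 16 * (1 - F a) \<le> 16"
    by (simp add: F_def)
  then show ?thesis
    unfolding interval cdf Z_def[symmetric] using Z by (simp add: field_simps)
qed

section \<open>Distances from a terminal to a shortest path\<close>

lemma finite_metric_space_dist_self: "finite_metric_space X d \<Longrightarrow> x \<in> X \<Longrightarrow> d x x = 0"
  and finite_metric_space_dist_nonneg:
    "finite_metric_space X d \<Longrightarrow> x \<in> X \<Longrightarrow> y \<in> X \<Longrightarrow> 0 \<le> d x y"
  and finite_metric_space_dist_commute:
    "finite_metric_space X d \<Longrightarrow> x \<in> X \<Longrightarrow> y \<in> X \<Longrightarrow> d x y = d y x"
  and finite_metric_space_triangle:
    "finite_metric_space X d \<Longrightarrow> x \<in> X \<Longrightarrow> y \<in> X \<Longrightarrow> z \<in> X \<Longrightarrow> d x z \<le> d x y + d y z"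
  unfolding finite_metric_space_def by blast+

lemma dist_nth_le_sum_steps:
  assumes "finite_metric_space X d" and "set P \<subseteq> X" and "i \<le> j" and "j < length P"
  shows "d (P ! i) (P ! j) \<le> (\<Sum>l\<in>{i..<j}. d (P ! l) (P ! Suc l))"
  using \<open>i \<le> j\<close> \<open>j < length P\<close>
proof (induction j rule: dec_induct)
  case base
  then have "P ! i \<in> X" using assms(2) nth_mem by blast
  then show ?case using assms(1) by (simp add: finite_metric_space_dist_self)
next
  case (step j)
  have "P ! i \<in> X" "P ! j \<in> X" "P ! Suc j \<in> X" using assms(2) step nth_mem by auto
  with assms(1) have "d (P ! i) (P ! Suc j) \<le> d (P ! i) (P ! j) + d (P ! j) (P ! Suc j)"
    by (rule finite_metric_space_triangle)
  also have "\<dots> \<le> (\<Sum>l\<in>{i..<Suc j}. d (P ! l) (P ! Suc l))"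
    using step by simp
  finally show ?case .
qed

lemma shortest_path_dist_le_length:
  assumes fm: "finite_metric_space X d" and sp: "shortest_path X d P"
    and "y \<in> set P" and "z \<in> set P"
  shows "d y z \<le> path_length d P"
proof -
  have PX: "set P \<subseteq> X"
    and steps: "(\<Sum>l<length P - 1. d (P ! l) (P ! Suc l)) = path_length d P"
    using sp unfolding shortest_path_def path_length_def by auto
  have le: "d (P ! i) (P ! j) \<le> path_length d P" if "i \<le> j" "j < length P" for i j
  proof -
    have "d (P ! i) (P ! j) \<le> (\<Sum>l\<in>{i..<j}. d (P ! l) (P ! Suc l))"
      using dist_nth_le_sum_steps[OF fm PX that] .
    also have "\<dots> \<le> (\<Sum>l<length P - 1. d (P ! l) (P ! Suc l))"
      using that
      by (intro sum_mono2) (auto intro!: finite_metric_space_dist_nonneg[OF fm] PX[THEN subsetD])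
    finally show ?thesis using steps by simp
  qed
  obtain i j where "i < length P" "y = P ! i" "j < length P" "z = P ! j"
    using assms(3,4) by (auto simp: in_set_conv_nth)
  moreover have "d (P ! j) (P ! i) = d (P ! i) (P ! j)"
    using \<open>i < length P\<close> \<open>j < length P\<close>
    by (intro finite_metric_space_dist_commute[OF fm] PX[THEN subsetD] nth_mem)
  ultimately show ?thesis
    using le[of i j] le[of j i] by (cases "i \<le> j") auto
qed

lemma shortest_path_Max_dist_le:
  assumes fm: "finite_metric_space X d" and sp: "shortest_path X d P" and "x \<in> X"
  shows "Max (d x ` set P) \<le> Min (d x ` set P) + path_length d P"
proof -
  have "P \<noteq> []" and PX: "set P \<subseteq> X" using sp unfolding shortest_path_def by auto
  then have "Min (d x ` set P) \<in> d x ` set P" and "Max (d x ` set P) \<in> d x ` set P"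
    by simp_all
  then obtain y z where y: "y \<in> set P" "Min (d x ` set P) = d x y"
    and z: "z \<in> set P" "Max (d x ` set P) = d x z"
    by (metis imageE)
  have "d x z \<le> d x y + d y z"
    using fm \<open>x \<in> X\<close> y z PX by (auto intro: finite_metric_space_triangle)
  then show ?thesis
    using shortest_path_dist_le_length[OF fm sp y(1) z(1)] y z by simp
qed

lemma measure_texp_straddle_bound:
  assumes fm: "finite_metric_space X d" and sp: "shortest_path X d P" and "x \<in> X"
    and lam: "lam > 0" and Del: "Del > 0" and "path_length d P \<le> lam"
  shows "25 * measure (texp lam Del) {Min (d x ` set P)..<Max (d x ` set P)}
    + 16 * measure (texp lam Del) {..<Min (d x ` set P)} \<le> 16 / (1 - exp (- Del / lam))"
proof (rule texp_interval_prefix_bound[OF lam Del])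
  have "P \<noteq> []" and "set P \<subseteq> X" using sp unfolding shortest_path_def by auto
  then show "0 \<le> Min (d x ` set P)" and "Min (d x ` set P) \<le> Max (d x ` set P)"
    using \<open>x \<in> X\<close> by (auto intro: finite_metric_space_dist_nonneg[OF fm])
  show "Max (d x ` set P) \<le> Min (d x ` set P) + lam"
    using shortest_path_Max_dist_le[OF fm sp \<open>x \<in> X\<close>] \<open>path_length d P \<le> lam\<close> by simp
qed

lemma measure_texp_straddle_bound_log:
  assumes fm: "finite_metric_space X d" and sp: "shortest_path X d P" and "x \<in> X"
    and "2 \<le> k" and "\<Delta> > 0" and "path_length d P \<le> \<Delta> / ln (real k)"
  shows "25 * measure (texp (\<Delta> / ln (real k)) \<Delta>) {Min (d x ` set P)..<Max (d x ` set P)}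
    + 16 * measure (texp (\<Delta> / ln (real k)) \<Delta>) {..<Min (d x ` set P)} \<le> 16 + 16 * (2 / real k)"
proof -
  define lam where "lam = \<Delta> / ln (real k)"
  have "lam > 0" unfolding lam_def using assms(4,5) by simp
  have "exp (- \<Delta> / lam) = 1 / real k"
    unfolding lam_def using assms(4,5) by (simp add: exp_minus inverse_eq_divide)
  then have "1 / (1 - exp (- \<Delta> / lam)) \<le> 1 + 2 * (1 / real k)"
    using inverse_one_minus_le[of "1 / real k"] assms(4) by simp
  then have "16 * (1 / (1 - exp (- \<Delta> / lam))) \<le> 16 * (1 + 2 * (1 / real k))"
    by (rule mult_left_mono) simp
  then show ?thesis
    using measure_texp_straddle_bound[OF fm sp \<open>x \<in> X\<close> \<open>lam > 0\<close> \<open>\<Delta> > 0\<close>] assms(6)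
    unfolding lam_def by simp
qed

section \<open>Clusters meeting a path\<close>

text \<open>In the application a j and b j are the least and greatest distance from t j to the path P.\<close>

definition straddling ::
    "nat \<Rightarrow> (nat \<Rightarrow> real) \<Rightarrow> (nat \<Rightarrow> real) \<Rightarrow> (nat \<Rightarrow> real) \<Rightarrow> nat set" where
  "straddling k a b R = {j \<in> {..<k}. a j \<le> R j \<and> R j < b j \<and> (\<forall>i<j. R i < b i)}"

text \<open>The radii for which n is the last straddling index and J the set of the earlier ones.\<close>

definition pattern_box ::
    "nat \<Rightarrow> (nat \<Rightarrow> real) \<Rightarrow> (nat \<Rightarrow> real) \<Rightarrow> nat \<Rightarrow> nat set \<Rightarrow> (nat \<Rightarrow> real) set" where
  "pattern_box k a b n J = (\<Pi>\<^sub>E i\<in>{..<k}.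
     if i < n then (if i \<in> J then {a i..<b i} else {..<a i}) else if i = n then {a n..<b n} else UNIV)"

lemma Z_count_le_card_straddling:
  assumes "\<And>j y. j < k \<Longrightarrow> y \<in> set P \<Longrightarrow> a j \<le> d (t j) y \<and> d (t j) y \<le> b j"
  shows "Z_count X d k t P R \<le> card (straddling k a b R) + 1"
proof -
  define hit where "hit = {j \<in> {..<k}. cluster X d t R j \<inter> set P \<noteq> {}}"
  define covering where "covering = {j \<in> {..<k}. b j \<le> R j \<and> (\<forall>i<j. R i < b i)}"
  have "Z_count X d k t P R \<le> card (cluster X d t R ` hit)"
    unfolding Z_count_def partial_partition_def hit_def by (intro card_mono) auto
  also have "\<dots> \<le> card hit"
    unfolding hit_def by (intro card_image_le) simp
  also have "hit \<subseteq> straddling k a b R \<union> covering"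
  proof
    fix j assume "j \<in> hit"
    then obtain y where "j < k" "y \<in> set P" "y \<in> cluster X d t R j"
      unfolding hit_def by auto
    then have "d (t j) y \<le> R j" and "\<forall>i<j. R i < d (t i) y"
      unfolding cluster_def cball_in_def by (auto simp: not_le)
    moreover have "a j \<le> d (t j) y" and "\<forall>i<j. d (t i) y \<le> b i"
      using assms \<open>j < k\<close> \<open>y \<in> set P\<close> by auto
    ultimately have "a j \<le> R j" and "\<forall>i<j. R i < b i"
      by (auto intro: less_le_trans)
    then show "j \<in> straddling k a b R \<union> covering"
      using \<open>j < k\<close> unfolding straddling_def covering_def by auto
  qed
  then have "card hit \<le> card (straddling k a b R \<union> covering)"
    by (intro card_mono) (auto simp: straddling_def covering_def)
  also have "\<dots> \<le> card (straddling k a b R) + card covering"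
    by (rule card_Un_le)
  also have "card covering \<le> 1"
  proof -
    have "i = j" if "i \<in> covering" "j \<in> covering" for i j
    proof (rule ccontr)
      assume "i \<noteq> j"
      then consider "i < j" | "j < i" by linarith
      then show False
        using that unfolding covering_def by cases (auto dest: leD)
    qed
    then show ?thesis
      using card_le_Suc0_iff_eq[of covering] by (simp add: covering_def)
  qed
  finally show ?thesis by simp
qed

lemma mem_pattern_box_Max_straddling:
  fixes k :: nat and a b R :: "nat \<Rightarrow> real"
  defines "S \<equiv> straddling k a b R"
  assumes "R \<in> (\<Pi>\<^sub>E i\<in>{..<k}. UNIV)" and "S \<noteq> {}"
  shows "R \<in> pattern_box k a b (Max S) (S - {Max S})"
  unfolding pattern_box_def
proof (rule PiE_I)
  have mem: "j \<in> S \<longleftrightarrow> j < k \<and> a j \<le> R j \<and> R j < b j \<and> (\<forall>i<j. R i < b i)" for j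
    unfolding S_def straddling_def by simp
  have "finite S" unfolding S_def straddling_def by simp
  then have "Max S \<in> S" using \<open>S \<noteq> {}\<close> by simp
  then have top: "a (Max S) \<le> R (Max S)" "R (Max S) < b (Max S)"
    and below: "\<forall>i<Max S. R i < b i"
    unfolding mem by auto
  fix i assume "i \<in> {..<k}"
  moreover have "R i < a i" if "i < Max S" "i \<notin> S"
    using that below \<open>i \<in> {..<k}\<close> unfolding mem by auto
  moreover have "R i \<in> {a i..<b i}" if "i \<in> S"
    using that unfolding mem by auto
  ultimately show "R i \<in> (if i < Max S then (if i \<in> S - {Max S} then {a i..<b i} else {..<a i})
      else if i = Max S then {a (Max S)..<b (Max S)} else UNIV)"
    using top by auto
next
  fix i assume "i \<notin> {..<k}"
  then show "R i = undefined" using assms(2) by (auto simp: PiE_def extensional_def)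
qed

lemma measure_pattern_box:
  assumes "prob_space T" and "sets T = sets borel" and "n < k" and "J \<subseteq> {..<n}"
  shows "measure (\<Pi>\<^sub>M i\<in>{..<k}. T) (pattern_box k a b n J) = measure T {a n..<b n}
    * ((\<Prod>i\<in>J. measure T {a i..<b i}) * (\<Prod>i\<in>{..<n} - J. measure T {..<a i}))"
proof -
  interpret T: prob_space T by (rule assms(1))
  interpret finite_product_prob_space "\<lambda>_. T" "{..<k}" by unfold_locales simp
  have "space T = UNIV" using sets_eq_imp_space_eq[OF assms(2)] by simp
  define B where "B i = (if i < n then (if i \<in> J then {a i..<b i} else {..<a i})
    else if i = n then {a n..<b n} else UNIV)" for i
  have "measure (\<Pi>\<^sub>M i\<in>{..<k}. T) (pattern_box k a b n J) = (\<Prod>i<k. measure T (B i))"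
    unfolding pattern_box_def B_def[symmetric]
    by (rule finite_measure_PiM_emb) (simp add: B_def assms(2))
  also have "\<dots> = (\<Prod>i<Suc n. measure T (B i))"
    using \<open>n < k\<close> T.prob_space \<open>space T = UNIV\<close>
    by (intro prod.mono_neutral_right) (auto simp: B_def)
  also have "\<dots> = measure T {a n..<b n} * (\<Prod>i<n. measure T (B i))"
    by (simp add: B_def)
  also have "(\<Prod>i<n. measure T (B i))
      = (\<Prod>i<n. if i \<in> J then measure T {a i..<b i} else measure T {..<a i})"
    by (rule prod.cong) (auto simp: B_def)
  also have "\<dots> = (\<Prod>i\<in>J. measure T {a i..<b i}) * (\<Prod>i\<in>{..<n} - J. measure T {..<a i})"
    using \<open>J \<subseteq> {..<n}\<close> by (simp add: prod.If_cases Int_absorb1 Diff_eq)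
  finally show ?thesis .
qed

lemma Z_count_tail_le:
  fixes T :: "real measure" and k :: nat and a b :: "nat \<Rightarrow> real" and \<epsilon> s :: real
  defines "M \<equiv> \<Pi>\<^sub>M i\<in>{..<k}. T"
  assumes T: "prob_space T" "sets T = sets borel"
    and bounds: "\<And>j y. j < k \<Longrightarrow> y \<in> set P \<Longrightarrow> a j \<le> d (t j) y \<and> d (t j) y \<le> b j"
    and key: "\<And>j. j < k \<Longrightarrow> 25 * measure T {a j..<b j} + 16 * measure T {..<a j} \<le> 16 + 16 * \<epsilon>"
    and "0 \<le> \<epsilon>" and "1 \<le> s"
  shows "measure M {R \<in> space M. s < real (Z_count X d k t P R)}
    \<le> (5/4) powr (1 - s) * (4 * (1 + \<epsilon>) ^ k)"
proof -
  interpret T: prob_space T by (rule T(1))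
  interpret finite_product_prob_space "\<lambda>_. T" "{..<k}" by unfold_locales simp
  define p where "p j = measure T {a j..<b j}" for j
  define q where "q j = measure T {..<a j}" for j
  define Js where "Js n = {J. J \<subseteq> {..<n} \<and> s - 2 < real (card J)}" for n :: nat
  have space_M: "space M = (\<Pi>\<^sub>E i\<in>{..<k}. UNIV)"
    using sets_eq_imp_space_eq[OF T(2)] by (simp add: M_def space_PiM)
  have box_sets: "pattern_box k a b n J \<in> sets M" for n J
    unfolding pattern_box_def M_def by (rule sets_PiM_I_finite) (auto simp: T(2))
  have Js_finite: "finite (Js n)" for n
    by (rule finite_subset[of _ "Pow {..<n}"]) (auto simp: Js_def)
  have "{R \<in> space M. s < real (Z_count X d k t P R)} \<subseteq> (\<Union>n<k. \<Union>J\<in>Js n. pattern_box k a b n J)"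
  proof safe
    fix R assume R: "R \<in> space M" and "s < real (Z_count X d k t P R)"
    define S where "S = straddling k a b R"
    have "Z_count X d k t P R \<le> card S + 1"
      unfolding S_def by (intro Z_count_le_card_straddling bounds)
    then have "real (Z_count X d k t P R) \<le> real (card S) + 1"
      by (metis of_nat_Suc of_nat_le_iff Suc_eq_plus1 add.commute)
    then have "s - 1 < real (card S)"
      using \<open>s < _\<close> by linarith
    then have "S \<noteq> {}" using \<open>1 \<le> s\<close> by auto
    have "S \<subseteq> {..<k}" unfolding S_def straddling_def by auto
    then have "finite S" by (rule finite_subset) simp
    have "Max S < k"
      using Max_in[OF \<open>finite S\<close> \<open>S \<noteq> {}\<close>] \<open>S \<subseteq> {..<k}\<close> by auto
    moreover have "S - {Max S} \<subseteq> {..<Max S}"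
      using Max_ge[OF \<open>finite S\<close>] by (auto simp: less_le)
    moreover have "S - {Max S} \<in> Js (Max S)"
      using \<open>S - {Max S} \<subseteq> _\<close> \<open>s - 1 < _\<close> \<open>finite S\<close> \<open>S \<noteq> {}\<close>
      by (simp add: Js_def Max_in)
    moreover have "R \<in> pattern_box k a b (Max S) (S - {Max S})"
      using mem_pattern_box_Max_straddling R \<open>S \<noteq> {}\<close> unfolding S_def space_M by blast
    ultimately show "R \<in> (\<Union>n<k. \<Union>J\<in>Js n. pattern_box k a b n J)" by blast
  qed
  then have "measure M {R \<in> space M. s < real (Z_count X d k t P R)}
      \<le> measure M (\<Union>n<k. \<Union>J\<in>Js n. pattern_box k a b n J)"
    using box_sets Js_finite unfolding M_def by (intro finite_measure_mono sets.finite_UN) auto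
  also have "\<dots> \<le> (\<Sum>n<k. measure M (\<Union>J\<in>Js n. pattern_box k a b n J))"
    using box_sets Js_finite unfolding M_def by (intro measure_UNION_le) auto
  also have "\<dots> \<le> (\<Sum>n<k. \<Sum>J\<in>Js n. measure M (pattern_box k a b n J))"
    using box_sets Js_finite unfolding M_def by (intro sum_mono measure_UNION_le) auto
  also have "\<dots> = (\<Sum>n<k. p n * (\<Sum>J\<in>Js n. (\<Prod>i\<in>J. p i) * (\<Prod>i\<in>{..<n} - J. q i)))"
    unfolding M_def sum_distrib_left
    by (intro sum.cong refl) (auto simp: Js_def p_def q_def measure_pattern_box[OF T])
  also have "\<dots> \<le> (\<Sum>n<k. p n * ((5/4) powr (- (s - 2)) * (\<Prod>i<n. 5/4 * p i + q i)))"
    unfolding Js_def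
    by (intro sum_mono mult_left_mono sum_subsets_card_gt_le_powr) (auto simp: p_def q_def)
  also have "\<dots> = (5/4) powr (1 - s) * (\<Sum>n<k. 5/4 * p n * (\<Prod>i<n. 5/4 * p i + q i))"
  proof -
    have "(5/4::real) powr (- (s - 2)) = (5/4) powr (1 - s) * (5/4)"
      using powr_add[of "5/4::real" "1 - s" 1] by simp
    then show ?thesis
      unfolding sum_distrib_left by (intro sum.cong refl) (simp add: algebra_simps)
  qed
  also have "\<dots> \<le> (5/4) powr (1 - s) * (4 * (1 + \<epsilon>) ^ k)"
  proof (intro mult_left_mono)
    have "0 \<le> (\<Prod>i<k. 5/4 * p i + q i)"
      by (intro prod_nonneg) (auto simp: p_def q_def)
    then show "(\<Sum>n<k. 5/4 * p n * (\<Prod>i<n. 5/4 * p i + q i)) \<le> 4 * (1 + \<epsilon>) ^ k"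
      using prefix_products_sum_le[of k p q \<epsilon>] key \<open>0 \<le> \<epsilon>\<close> by (simp add: p_def q_def)
  qed simp
  finally show ?thesis .
qed

theorem mainTheorem4:
  shows "\<exists>c>0. \<forall>(X :: nat set) d k (t :: nat \<Rightarrow> nat) \<Delta> P (s :: real).
     finite_metric_space X d \<longrightarrow> k \<ge> 2 \<longrightarrow> t ` {..<k} \<subseteq> X \<longrightarrow> inj_on t {..<k} \<longrightarrow>
     \<Delta> > 0 \<longrightarrow> shortest_path X d P \<longrightarrow> path_length d P < \<Delta> / ln (real k) \<longrightarrow> s \<ge> 1 \<longrightarrow>
     measure (radii_measure k (\<Delta> / ln (real k)) \<Delta>)
       {R \<in> space (radii_measure k (\<Delta> / ln (real k)) \<Delta>). real (Z_count X d k t P R) > s}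
       \<le> 2 * exp (- c * s)"
proof (intro exI[of _ "ln (5/4) / 7"] conjI allI impI)
  fix X :: "nat set" and d k and t :: "nat \<Rightarrow> nat" and \<Delta> P and s :: real
  assume fm: "finite_metric_space X d" and "2 \<le> k" and tX: "t ` {..<k} \<subseteq> X"
    and "0 < \<Delta>" and sp: "shortest_path X d P"
    and short: "path_length d P < \<Delta> / ln (real k)" and "1 \<le> s"
  define lam where "lam = \<Delta> / ln (real k)"
  have "lam > 0" unfolding lam_def using \<open>2 \<le> k\<close> \<open>0 < \<Delta>\<close> by simp
  have "Min (d x ` set P) \<le> d x y \<and> d x y \<le> Max (d x ` set P)" if "y \<in> set P" for x y
    using that by simp
  then have "measure (radii_measure k lam \<Delta>)
      {R \<in> space (radii_measure k lam \<Delta>). s < real (Z_count X d k t P R)}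
      \<le> (5/4) powr (1 - s) * (4 * (1 + 2 / real k) ^ k)"
    unfolding radii_measure_def lam_def using tX short \<open>2 \<le> k\<close> \<open>0 < \<Delta>\<close> \<open>1 \<le> s\<close> \<open>lam > 0\<close>
    by (intro Z_count_tail_le[where a = "\<lambda>j. Min (d (t j) ` set P)" and b = "\<lambda>j. Max (d (t j) ` set P)"]
        prob_space_texp measure_texp_straddle_bound_log[OF fm sp]) (auto simp: lam_def)
  also have "\<dots> \<le> (5/4) powr (1 - s) * (4 * exp 2)"
    using exp_ge_one_plus_x_over_n_power_n[of k 2] \<open>2 \<le> k\<close> by (intro mult_left_mono) auto
  also have "\<dots> \<le> 37 * exp (- (7 * (ln (5/4) / 7 * s)))"
    by (rule five_fourths_powr_tail_le)
  finally have "measure (radii_measure k lam \<Delta>)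
      {R \<in> space (radii_measure k lam \<Delta>). s < real (Z_count X d k t P R)}
      \<le> 2 * exp (- (ln (5/4) / 7 * s))"
    using prob_space.prob_le_1[OF prob_space_PiM, OF prob_space_texp[OF \<open>lam > 0\<close> \<open>0 < \<Delta>\<close>]]
    unfolding radii_measure_def by (intro le_two_exp_of_le_min)
  then show "measure (radii_measure k (\<Delta> / ln (real k)) \<Delta>)
      {R \<in> space (radii_measure k (\<Delta> / ln (real k)) \<Delta>). real (Z_count X d k t P R) > s}
      \<le> 2 * exp (- (ln (5/4) / 7) * s)"
    unfolding lam_def by simp
qed simp

end
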